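(* Let $m,n\in\mathbb{N}$, $0<\ell\le\infty$, let $J$ be an $m\times m$ matrix with $J^*=-J$, and $H_1(x)\ge0$, $H_0(x)=H_0(x)^*$ be $m\times m$ matrix functions locally summable on $[0,\ell)$. Let $A$, $S(0)>0$ be $n\times n$ and $\Pi(0)$ be $n\times m$ matrices with $AS(0)-S(0)A^*=\Pi(0)J\Pi(0)^*$, and define $\Pi(x),S(x)$ by $\Pi'=-A\Pi JH_1-\Pi JH_0$, $S'=\Pi JH_1J^*\Pi^*$. For $h\in\mathbb{C}^n$ let $\widetilde z(x,t)=J\Pi(x)^*S(x)^{-1}\mathrm{e}^{-tA}h$, and for $0<a<\ell$ define $E_{\widetilde z}(t)\ge0$ by $E_{\widetilde z}(t)^2=\int_0^a\widetilde z(x,t)^*H_1(x)\widetilde z(x,t)\,dx$. Then $$E_{\widetilde z}(t)=\sqrt{h^*\mathrm{e}^{-tA^*}\big(S(0)^{-1}-S(a)^{-1}\big)\mathrm{e}^{-tA}h}.$$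
   Context: $E_{\widetilde z}(t)$ is called the energy on $[0,a]$ of the solution $\widetilde z$ of the transformed dynamical system $\partial_x\widetilde z=J(-H_1\partial_t\widetilde z+\widetilde H_0\widetilde z)$, $\widetilde H_0=H_0-X^*H_1-H_1X$, $X=J\Pi^*S^{-1}\Pi$. $S>0$ means positive definite. *)

theory Defs
  imports "HOL-Analysis.Analysis"
begin

definition adjoint_mat :: "complex^'n^'m \<Rightarrow> complex^'m^'n" where
  "adjoint_mat M = (\<chi> i j. cnj (M $ j $ i))"

definition cdot :: "complex^'n \<Rightarrow> complex^'n \<Rightarrow> complex" where
  "cdot u v = (\<Sum>i\<in>UNIV. cnj (u $ i) * v $ i)"

definition hermitian_mat :: "complex^'n^'n \<Rightarrow> bool" where
  "hermitian_mat M \<longleftrightarrow> adjoint_mat M = M"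

definition psd_mat :: "complex^'n^'n \<Rightarrow> bool" where
  "psd_mat M \<longleftrightarrow> hermitian_mat M \<and> (\<forall>h. Re (cdot h (M *v h)) \<ge> 0 \<and> Im (cdot h (M *v h)) = 0)"

definition pd_mat :: "complex^'n^'n \<Rightarrow> bool" where
  "pd_mat M \<longleftrightarrow> hermitian_mat M \<and> (\<forall>h. h \<noteq> 0 \<longrightarrow> Re (cdot h (M *v h)) > 0 \<and> Im (cdot h (M *v h)) = 0)"

primrec mat_pow :: "complex^'n^'n \<Rightarrow> nat \<Rightarrow> complex^'n^'n" where
  "mat_pow M 0 = mat 1"
| "mat_pow M (Suc k) = M ** mat_pow M k"

definition mat_exp :: "complex^'n^'n \<Rightarrow> complex^'n^'n" where
  "mat_exp M = (\<Sum>k. (1 / fact k :: real) *\<^sub>R mat_pow M k)"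

end

theory Submission
  imports Defs
begin

text \<open>
  Write \<open>G(x) = S(x)\<^sup>-\<^sup>1\<close> and \<open>v = e\<^sup>-\<^sup>t\<^sup>A h\<close>. Since \<open>S(x) - S(0)\<close> is the integral of the positive
  semidefinite matrix \<open>F = \<Pi> J H\<^sub>1 J\<^sup>* \<Pi>\<^sup>*\<close>, \<open>S\<close> stays uniformly positive definite, so
  \<open>G v\<close> is bounded and continuous. The resolvent identity
  \<open>G(x) - G(y) = G(x) (S(y) - S(x)) G(y)\<close> writes \<open>v\<^sup>* (G(x) - G(y)) v\<close> as the integral over
  \<open>[x, y]\<close> of \<open>(G(x) v)\<^sup>* F (G(y) v)\<close>, which on short intervals differs from the integral of
  \<open>(G v)\<^sup>* F (G v)\<close> by a small multiple of \<open>\<integral>|F|\<close>; summing over fine partitions gives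
  \<open>v\<^sup>* (S(0)\<^sup>-\<^sup>1 - S(a)\<^sup>-\<^sup>1) v = \<integral>\<^sub>0\<^sup>a (G v)\<^sup>* F (G v)\<close>. Finally \<open>z\<^sup>* H\<^sub>1 z = (G v)\<^sup>* F (G v)\<close> because
  \<open>J\<^sup>* = -J\<close>.
\<close>

lemma adjoint_mat_adjoint_mat [simp]: "adjoint_mat (adjoint_mat M) = M"
  by (simp add: adjoint_mat_def vec_eq_iff)

lemma adjoint_mat_mult: "adjoint_mat (X ** Y) = adjoint_mat Y ** adjoint_mat X"
  by (simp add: adjoint_mat_def matrix_matrix_mult_def vec_eq_iff mult.commute)

lemma adjoint_mat_1 [simp]: "adjoint_mat (mat 1 :: complex^'n^'n) = mat 1"
  by (simp add: adjoint_mat_def mat_def vec_eq_iff)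

lemma adjoint_mat_diff: "adjoint_mat (X - Y) = adjoint_mat X - adjoint_mat Y"
  by (simp add: adjoint_mat_def vec_eq_iff)

lemma adjoint_mat_minus: "adjoint_mat (- X) = - adjoint_mat X"
  by (simp add: adjoint_mat_def vec_eq_iff)

lemma adjoint_mat_scaleR: "adjoint_mat (r *\<^sub>R X) = r *\<^sub>R adjoint_mat X"
  by (simp add: adjoint_mat_def vec_eq_iff)

lemma bounded_linear_adjoint_mat: "bounded_linear (adjoint_mat :: complex^'n^'m \<Rightarrow> complex^'m^'n)"
  unfolding linear_conv_bounded_linear[symmetric]
  by (rule linearI) (simp_all add: adjoint_mat_def vec_eq_iff)

lemma cdot_adjoint_mat: "cdot u (adjoint_mat M *v w) = cdot (M *v u) w"
  unfolding cdot_def adjoint_mat_def matrix_vector_mult_def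
  by (simp add: sum_distrib_left sum_distrib_right mult_ac) (rule sum.swap)

lemma cdot_adjoint_mat_left: "cdot (adjoint_mat M *v u) w = cdot u (M *v w)"
  using cdot_adjoint_mat[of u "adjoint_mat M" w] by simp

lemma Re_cdot: "Re (cdot u w) = inner u w"
  by (simp add: cdot_def inner_vec_def inner_complex_def)

lemma norm_cdot_le: "norm (cdot u w) \<le> norm u * norm w"
proof -
  have "norm (cdot u w) \<le> (\<Sum>i\<in>UNIV. \<bar>norm (u $ i)\<bar> * \<bar>norm (w $ i)\<bar>)"
    unfolding cdot_def by (rule order_trans[OF norm_sum]) (simp add: norm_mult)
  also have "\<dots> \<le> norm u * norm w"
    unfolding norm_vec_def by (rule L2_set_mult_ineq)
  finally show ?thesis .
qed

lemma cdot_diff_left: "cdot (u - u') w = cdot u w - cdot u' w"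
  by (simp add: cdot_def algebra_simps sum_subtractf)

lemma cdot_diff_mat: "cdot u ((X - Y) *v w) = cdot u (X *v w) - cdot u (Y *v w)"
  by (simp add: cdot_def sum_subtractf algebra_simps)

lemma bilinear_cdot: "bilinear cdot"
  unfolding bilinear_def
  by (auto intro!: linearI simp: cdot_def algebra_simps sum.distrib sum_distrib_left)
     (simp_all add: scaleR_conv_of_real algebra_simps sum_distrib_left)

lemma bilinear_matrix_vector_mult: "bilinear ((*v) :: complex^'n^'m \<Rightarrow> complex^'n \<Rightarrow> complex^'m)"
  unfolding bilinear_def
  by (auto intro!: linearI simp: matrix_vector_mult_def vec_eq_iff algebra_simps sum.distrib
      sum_distrib_left)
     (simp_all add: scaleR_conv_of_real algebra_simps sum_distrib_left)

lemma bilinear_matrix_matrix_mult: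
  "bilinear ((**) :: complex^'n^'m \<Rightarrow> complex^'k^'n \<Rightarrow> complex^'k^'m)"
  unfolding bilinear_def
  by (auto intro!: linearI simp: matrix_matrix_mult_def vec_eq_iff algebra_simps sum.distrib
      sum_distrib_left)
     (simp_all add: scaleR_conv_of_real algebra_simps sum_distrib_left)

lemma bounded_linear_cdot_mat: "bounded_linear (\<lambda>M. cdot u (M *v w))"
proof -
  have "linear (\<lambda>M. cdot u (M *v w))"
    using linear_compose[of "\<lambda>M. M *v w" "cdot u"] bilinear_matrix_vector_mult bilinear_cdot
    unfolding bilinear_def o_def by blast
  then show ?thesis by (simp add: linear_conv_bounded_linear)
qed

lemma mat_pow_commute: "mat_pow M k ** M = M ** mat_pow M k"
proof (induction k)
  case (Suc k)
  then show ?case by (simp add: matrix_mul_assoc[symmetric])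
qed simp

lemma adjoint_mat_mat_pow: "adjoint_mat (mat_pow M k) = mat_pow (adjoint_mat M) k"
  by (induction k) (simp_all add: adjoint_mat_mult mat_pow_commute[symmetric])

lemma summable_mat_exp: "summable (\<lambda>k. (1 / fact k :: real) *\<^sub>R mat_pow (M :: complex^'n^'n) k)"
proof -
  obtain B where B: "B > 0"
    "\<And>(X :: complex^'n^'n) (Y :: complex^'n^'n). norm (X ** Y) \<le> B * norm X * norm Y"
    using bilinear_bounded_pos[OF bilinear_matrix_matrix_mult] by blast
  have pow_le: "norm (mat_pow M k) \<le> norm (mat 1 :: complex^'n^'n) * (B * norm M) ^ k" for k
  proof (induction k)
    case (Suc k)
    have "norm (mat_pow M (Suc k)) \<le> B * norm M * norm (mat_pow M k)"
      using B(2)[of M "mat_pow M k"] by simp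
    also have "\<dots> \<le> B * norm M * (norm (mat 1 :: complex^'n^'n) * (B * norm M) ^ k)"
      using Suc B(1) by (simp add: mult_left_mono)
    finally show ?case by (simp add: mult_ac)
  qed simp
  have "summable (\<lambda>k. norm (mat 1 :: complex^'n^'n) * (inverse (fact k) * (B * norm M) ^ k))"
    by (intro summable_mult summable_exp)
  then show ?thesis
    by (rule summable_comparison_test')
       (use pow_le in \<open>simp add: divide_inverse mult_left_mono mult.left_commute\<close>)
qed

lemma adjoint_mat_mat_exp: "adjoint_mat (mat_exp M) = mat_exp (adjoint_mat (M :: complex^'n^'n))"
  unfolding mat_exp_def
  by (simp add: bounded_linear.suminf[OF bounded_linear_adjoint_mat summable_mat_exp]
      adjoint_mat_scaleR adjoint_mat_mat_pow)

lemma matrix_inv_right: "invertible X \<Longrightarrow> X ** matrix_inv X = mat 1"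
  and matrix_inv_left: "invertible X \<Longrightarrow> matrix_inv X ** X = mat 1"
  unfolding invertible_def matrix_inv_def by (metis (mono_tags, lifting) someI_ex)+

lemma matrix_inv_diff:
  fixes X Y :: "complex^'n^'n"
  assumes "invertible X" "invertible Y"
  shows "matrix_inv X - matrix_inv Y = matrix_inv X ** (Y - X) ** matrix_inv Y"
  by (simp add: bilinear_rsub[OF bilinear_matrix_matrix_mult] bilinear_lsub[OF bilinear_matrix_matrix_mult]
      matrix_inv_left[OF assms(1)] matrix_inv_right[OF assms(2)] flip: matrix_mul_assoc)

lemma has_integral_psd_mat:
  fixes F :: "real \<Rightarrow> complex^'n^'n"
  assumes int: "(F has_integral I) T" and psd: "\<And>y. y \<in> T \<Longrightarrow> psd_mat (F y)"
  shows "psd_mat I"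
proof -
  have "(F has_integral adjoint_mat I) T"
    using psd
    by (intro has_integral_eq[OF _ has_integral_linear[OF int bounded_linear_adjoint_mat]])
       (simp add: psd_mat_def hermitian_mat_def)
  then have "hermitian_mat I"
    using int has_integral_unique unfolding hermitian_mat_def by blast
  moreover have "0 \<le> Re (cdot h (I *v h))" "Im (cdot h (I *v h)) = 0" for h
  proof -
    have quad: "((\<lambda>y. cdot h (F y *v h)) has_integral cdot h (I *v h)) T"
      using has_integral_linear[OF int bounded_linear_cdot_mat] by (simp add: o_def)
    have "((\<lambda>y. Re (cdot h (F y *v h))) has_integral Re (cdot h (I *v h))) T"
      using has_integral_linear[OF quad bounded_linear_Re] by (simp add: o_def)
    then show "0 \<le> Re (cdot h (I *v h))"
      by (rule has_integral_nonneg) (use psd in \<open>simp add: psd_mat_def\<close>)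
    have "((\<lambda>y. Im (cdot h (F y *v h))) has_integral 0) T"
      using psd by (intro has_integral_is_0) (simp add: psd_mat_def)
    moreover have "((\<lambda>y. Im (cdot h (F y *v h))) has_integral Im (cdot h (I *v h))) T"
      using has_integral_linear[OF quad bounded_linear_Im] by (simp add: o_def)
    ultimately show "Im (cdot h (I *v h)) = 0"
      by (metis has_integral_unique)
  qed
  ultimately show ?thesis by (simp add: psd_mat_def)
qed

lemma pd_mat_coercive:
  fixes M :: "complex^'n^'n"
  assumes "pd_mat M"
  obtains c where "c > 0" "\<And>u. c * (norm u)\<^sup>2 \<le> Re (cdot u (M *v u))"
proof -
  define q where "q u = inner u (M *v u)" for u
  have q_scale: "q (r *\<^sub>R u) = r\<^sup>2 * q u" for r u
    by (simp add: q_def bilinear_rmul[OF bilinear_matrix_vector_mult] power2_eq_square)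
  have "continuous_on UNIV q"
    unfolding q_def by (intro continuous_intros linear_continuous_on matrix_vector_mul_linear)
  moreover have "sphere (0::complex^'n) 1 \<noteq> {}"
    using vector_choose_size[of 1] by auto
  ultimately obtain u0 where u0: "u0 \<in> sphere 0 1" "\<And>u. u \<in> sphere 0 1 \<Longrightarrow> q u0 \<le> q u"
    using continuous_attains_inf[OF compact_sphere _ continuous_on_subset] by (metis subset_UNIV)
  have "u0 \<noteq> 0"
    using u0(1) by auto
  then have "q u0 > 0"
    using assms by (simp add: pd_mat_def q_def Re_cdot[symmetric])
  moreover have "q u0 * (norm u)\<^sup>2 \<le> q u" for u
  proof (cases "u = 0")
    case False
    then have "q ((1 / norm u) *\<^sub>R u) * (norm u)\<^sup>2 = q u"
      by (simp add: q_scale power2_eq_square)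
    moreover have "q u0 \<le> q ((1 / norm u) *\<^sub>R u)"
      using False by (intro u0(2)) simp
    ultimately show ?thesis
      by (metis mult_right_mono zero_le_power2)
  qed (simp add: q_def)
  ultimately show ?thesis
    using that by (simp add: q_def Re_cdot)
qed

lemma norm_mult_ge_if_coercive:
  assumes "c * (norm u)\<^sup>2 \<le> Re (cdot u (M *v u))"
  shows "c * norm u \<le> norm (M *v u)"
proof (cases "u = 0")
  case False
  have "c * norm u * norm u \<le> norm u * norm (M *v u)"
    using assms norm_cauchy_schwarz[of u "M *v u"] by (simp add: Re_cdot power2_eq_square)
  then show ?thesis
    using False by (simp add: mult.commute)
qed simp

lemma invertible_if_norm_mult_ge:
  fixes M :: "complex^'n^'n"
  assumes "c > 0" "\<And>u. c * norm u \<le> norm (M *v u)"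
  shows "invertible M"
proof -
  have "u = 0" if "M *v u = 0" for u
    using assms(2)[of u] that \<open>c > 0\<close> by (metis mult_pos_pos norm_zero not_le zero_less_norm_iff)
  then show ?thesis
    using invertible_left_inverse matrix_left_invertible_ker by blast
qed

lemma norm_matrix_inv_mult_le:
  fixes M :: "complex^'n^'n"
  assumes "c > 0" "\<And>u. c * norm u \<le> norm (M *v u)"
  shows "norm (matrix_inv M *v q) \<le> norm q / c"
proof -
  have "M *v (matrix_inv M *v q) = q"
    using matrix_inv_right[OF invertible_if_norm_mult_ge[OF assms]]
    by (simp add: matrix_vector_mul_assoc)
  then show ?thesis
    using assms by (metis mult.commute pos_le_divide_eq)
qed

lemma hermitian_matrix_inv:
  fixes M :: "complex^'n^'n"
  assumes "invertible M" "adjoint_mat M = M"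
  shows "adjoint_mat (matrix_inv M) = matrix_inv M"
proof -
  have left_inv: "adjoint_mat (matrix_inv M) ** M = mat 1"
    using arg_cong[OF matrix_inv_right[OF assms(1)], of adjoint_mat] assms(2)
    by (simp add: adjoint_mat_mult)
  have "adjoint_mat (matrix_inv M) = (adjoint_mat (matrix_inv M) ** M) ** matrix_inv M"
    by (simp add: matrix_inv_right[OF assms(1)] flip: matrix_mul_assoc)
  also have "\<dots> = matrix_inv M"
    by (simp only: left_inv matrix_mul_lid)
  finally show ?thesis .
qed

lemma norm_matrix_vector_mult_le:
  fixes M :: "complex^'n^'m"
  shows "norm (M *v q) \<le> norm M * norm q"
proof -
  have row: "norm ((M *v q) $ i) \<le> norm (M $ i) * norm q" for i
  proof -
    have "norm ((M *v q) $ i) = norm (\<Sum>j\<in>UNIV. M $ i $ j * q $ j)"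
      by (simp add: matrix_vector_mult_def)
    also have "\<dots> \<le> (\<Sum>j\<in>UNIV. \<bar>norm (M $ i $ j)\<bar> * \<bar>norm (q $ j)\<bar>)"
      by (rule order_trans[OF norm_sum]) (simp add: norm_mult)
    also have "\<dots> \<le> norm (M $ i) * norm q"
      unfolding norm_vec_def by (rule L2_set_mult_ineq)
    finally show ?thesis .
  qed
  have "norm (M *v q) \<le> L2_set (\<lambda>i. norm (M $ i) * norm q) UNIV"
    by (subst norm_vec_def) (rule L2_set_mono; simp add: row)
  also have "\<dots> = norm M * norm q"
    by (simp add: L2_set_left_distrib norm_vec_def)
  finally show ?thesis .
qed

lemma norm_cdot_mult_diff_le:
  fixes M :: "complex^'n^'n"
  shows "norm (cdot p (M *v q) - cdot r (M *v r))
    \<le> norm M * (norm (p - r) * norm q + norm r * norm (q - r))"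
proof -
  have "cdot p (M *v q) - cdot r (M *v r) = cdot (p - r) (M *v q) + cdot r (M *v (q - r))"
    by (simp add: cdot_diff_left bilinear_rsub[OF bilinear_cdot] matrix_vector_mult_diff_distrib)
  also have "norm \<dots> \<le> norm (p - r) * (norm M * norm q) + norm r * (norm M * norm (q - r))"
    by (intro norm_triangle_le add_mono order_trans[OF norm_cdot_le] mult_left_mono
        norm_matrix_vector_mult_le norm_ge_zero)
  finally show ?thesis
    by (simp add: algebra_simps)
qed

lemma continuous_on_if_has_integral_increments:
  fixes f P :: "real \<Rightarrow> 'a::banach"
  assumes "\<And>x. x \<in> {a..b} \<Longrightarrow> (f has_integral (P x - P a)) {a..x}"
  shows "continuous_on {a..b} P"
proof (cases "a \<le> b")
  case True
  then have "f integrable_on {a..b}"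
    by (intro has_integral_integrable[OF assms]) simp
  then have "continuous_on {a..b} (\<lambda>x. P a + integral {a..x} f)"
    by (intro continuous_intros indefinite_integral_continuous_1)
  moreover have "P a + integral {a..x} f = P x" if "x \<in> {a..b}" for x
    using integral_unique[OF assms[OF that]] by simp
  ultimately show ?thesis
    by (rule continuous_on_eq)
qed simp

lemma absolutely_integrable_continuous_bilinear:
  fixes f :: "real \<Rightarrow> 'a::euclidean_space" and g :: "real \<Rightarrow> 'b::euclidean_space"
    and h :: "'a \<Rightarrow> 'b \<Rightarrow> 'c::euclidean_space"
  assumes "bilinear h" "continuous_on {a..b} f" "g absolutely_integrable_on {a..b}"
  shows "(\<lambda>x. h (f x) (g x)) absolutely_integrable_on {a..b}"
  by (rule absolutely_integrable_bounded_measurable_product[OF assms(1)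
        continuous_imp_measurable_on_sets_lebesgue[OF assms(2)] _
        compact_imp_bounded[OF compact_continuous_image[OF assms(2) compact_Icc]] assms(3)]) auto

lemma continuous_on_matrix_inv_mult:
  fixes S :: "'a::topological_space \<Rightarrow> complex^'n^'n"
  assumes cont: "continuous_on T S" and "c > 0"
    and bound: "\<And>x u. x \<in> T \<Longrightarrow> c * norm u \<le> norm (S x *v u)"
  shows "continuous_on T (\<lambda>x. matrix_inv (S x) *v v)"
  unfolding continuous_on_def
proof
  fix x0 assume x0: "x0 \<in> T"
  define w where "w x = matrix_inv (S x) *v v" for x
  have "norm (w x - w x0) \<le> norm (S x - S x0) * norm (w x0) / c" if x: "x \<in> T" for x
  proof -
    have "w x - w x0 = (matrix_inv (S x) - matrix_inv (S x0)) *v v"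
      by (simp add: w_def matrix_vector_mult_diff_rdistrib)
    also have "\<dots> = matrix_inv (S x) *v ((S x0 - S x) *v w x0)"
      unfolding matrix_inv_diff[OF invertible_if_norm_mult_ge[OF \<open>c > 0\<close> bound[OF x]]
          invertible_if_norm_mult_ge[OF \<open>c > 0\<close> bound[OF x0]]]
      by (simp add: w_def matrix_vector_mul_assoc matrix_mul_assoc)
    also have "norm \<dots> \<le> norm ((S x0 - S x) *v w x0) / c"
      by (rule norm_matrix_inv_mult_le[OF \<open>c > 0\<close> bound[OF x]])
    also have "\<dots> \<le> norm (S x - S x0) * norm (w x0) / c"
      using norm_matrix_vector_mult_le[of "S x0 - S x" "w x0"] \<open>c > 0\<close>
      by (simp add: divide_right_mono norm_minus_commute)
    finally show ?thesis .
  qed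
  then have "\<forall>\<^sub>F x in at x0 within T. norm (w x - w x0) \<le> norm (S x - S x0) * norm (w x0) / c"
    by (auto simp: eventually_at_filter)
  moreover have "((\<lambda>x. norm (S x - S x0) * norm (w x0) / c) \<longlongrightarrow> 0) (at x0 within T)"
    using cont x0 unfolding continuous_on_def
    by (intro tendsto_divide_zero tendsto_mult_left_zero tendsto_norm_zero) (simp add: LIM_zero)
  ultimately have "((\<lambda>x. w x - w x0) \<longlongrightarrow> 0) (at x0 within T)"
    by (rule Lim_null_comparison)
  then show "(w \<longlongrightarrow> w x0) (at x0 within T)"
    by (rule LIM_zero_cancel)
qed

lemma norm_diff_le_if_local_increments_le:
  fixes f :: "real \<Rightarrow> 'a::real_normed_vector" and g :: "real \<Rightarrow> real"
  assumes "a \<le> b" "d > 0"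
    and local: "\<And>x y. a \<le> x \<Longrightarrow> x \<le> y \<Longrightarrow> y \<le> b \<Longrightarrow> y - x < d \<Longrightarrow>
      norm (f y - f x) \<le> e * (g y - g x)"
  shows "norm (f b - f a) \<le> e * (g b - g a)"
proof -
  define N :: nat where "N = nat \<lceil>(b - a) / d\<rceil> + 1"
  define x where "x k = a + (b - a) * real k / real N" for k
  have "N > 0" "(b - a) / d < real N"
    unfolding N_def by linarith+
  then have "(b - a) / real N < d"
    using \<open>d > 0\<close> by (simp add: field_simps)
  moreover have "x (Suc k) - x k = (b - a) / real N" for k
    using \<open>N > 0\<close> by (simp add: x_def field_simps)
  ultimately have step: "x (Suc k) - x k < d" for k
    by simp
  have x_mono: "x k \<le> x (Suc k)" for k
    using \<open>a \<le> b\<close> \<open>N > 0\<close> by (simp add: x_def field_simps)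
  have x_ge: "a \<le> x k" for k
    using \<open>a \<le> b\<close> \<open>N > 0\<close> by (simp add: x_def)
  have x_le: "x k \<le> b" if "k \<le> N" for k
  proof -
    have "(b - a) * (real k / real N) \<le> (b - a) * 1"
      using \<open>a \<le> b\<close> \<open>N > 0\<close> that by (intro mult_left_mono) simp_all
    then show ?thesis
      by (simp add: x_def)
  qed
  have "norm (f (x k) - f a) \<le> e * (g (x k) - g a)" if "k \<le> N" for k
    using that
  proof (induction k)
    case (Suc k)
    have "norm (f (x (Suc k)) - f a) \<le> norm (f (x (Suc k)) - f (x k)) + norm (f (x k) - f a)"
      using norm_triangle_ineq[of "f (x (Suc k)) - f (x k)" "f (x k) - f a"] by simp
    also have "\<dots> \<le> e * (g (x (Suc k)) - g (x k)) + e * (g (x k) - g a)"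
      by (rule add_mono[OF local[OF x_ge x_mono x_le[OF Suc.prems] step] Suc.IH]) (use Suc.prems in simp)
    finally show ?case
      by (simp add: algebra_simps)
  qed (simp add: x_def)
  moreover have "x N = b"
    using \<open>N > 0\<close> by (simp add: x_def)
  ultimately show ?thesis
    by (metis order_refl)
qed

lemma eq_if_increments_small:
  fixes f :: "real \<Rightarrow> 'a::real_normed_vector" and g :: "real \<Rightarrow> real"
  assumes "a \<le> b"
    and small: "\<And>e. e > 0 \<Longrightarrow> \<exists>d>0. \<forall>x y. a \<le> x \<longrightarrow> x \<le> y \<longrightarrow> y \<le> b \<longrightarrow> y - x < d \<longrightarrow>
                  norm (f y - f x) \<le> e * (g y - g x)"
  shows "f b = f a"
proof -
  have bound: "norm (f b - f a) \<le> e * (g b - g a)" if "e > 0" for e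
    using small[OF that] norm_diff_le_if_local_increments_le[OF \<open>a \<le> b\<close>] by blast
  have "norm (f b - f a) \<le> 0 + e" if "e > 0" for e
  proof (cases "g b - g a \<le> 0")
    case True
    then show ?thesis
      using bound[of 1] that by simp
  next
    case False
    then have "e / (g b - g a) * (g b - g a) = e"
      by simp
    then show ?thesis
      using bound[of "e / (g b - g a)"] that False by simp
  qed
  then have "norm (f b - f a) \<le> 0"
    by (rule field_le_epsilon)
  then show ?thesis
    by simp
qed

lemma has_integral_if_increments_approx:
  fixes T phi :: "real \<Rightarrow> 'a::banach" and g :: "real \<Rightarrow> real"
  assumes "a \<le> b" and phi: "phi integrable_on {a..b}" and g: "g integrable_on {a..b}"
    and approx: "\<And>e. e > 0 \<Longrightarrow> \<exists>d>0. \<forall>x y. a \<le> x \<longrightarrow> x \<le> y \<longrightarrow> y \<le> b \<longrightarrow> y - x < d \<longrightarrow>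
        norm (T y - T x - integral {x..y} phi) \<le> e * integral {x..y} g"
  shows "(phi has_integral (T b - T a)) {a..b}"
proof -
  define f where "f x = T x - integral {a..x} phi" for x
  have increments: "f y - f x = T y - T x - integral {x..y} phi"
    "integral {a..y} g - integral {a..x} g = integral {x..y} g"
    if "a \<le> x" "x \<le> y" "y \<le> b" for x y
  proof -
    have "phi integrable_on {a..y}" "g integrable_on {a..y}"
      using integrable_subinterval_real[OF phi] integrable_subinterval_real[OF g] that by auto
    then have "integral {a..x} phi + integral {x..y} phi = integral {a..y} phi"
      "integral {a..x} g + integral {x..y} g = integral {a..y} g"
      by (simp_all add: Henstock_Kurzweil_Integration.integral_combine[OF that(1,2)])
    then show "f y - f x = T y - T x - integral {x..y} phi"
      "integral {a..y} g - integral {a..x} g = integral {x..y} g"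
      by (auto simp: f_def algebra_simps)
  qed
  have "f b = f a"
  proof (rule eq_if_increments_small[where g = "\<lambda>x. integral {a..x} g", OF \<open>a \<le> b\<close>])
    fix e :: real assume "e > 0"
    then show "\<exists>d>0. \<forall>x y. a \<le> x \<longrightarrow> x \<le> y \<longrightarrow> y \<le> b \<longrightarrow> y - x < d \<longrightarrow>
        norm (f y - f x) \<le> e * (integral {a..y} g - integral {a..x} g)"
      using approx[of e] increments by simp
  qed
  then have "integral {a..b} phi = T b - T a"
    by (simp add: f_def algebra_simps)
  then show ?thesis
    using phi by (metis has_integral_integral)
qed

lemma cdot_matrix_inv_diff:
  fixes X Y :: "complex^'n^'n"
  assumes "invertible X" "invertible Y" "adjoint_mat X = X"
  shows "cdot v ((matrix_inv X - matrix_inv Y) *v v)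
    = cdot (matrix_inv X *v v) ((Y - X) *v (matrix_inv Y *v v))"
proof -
  have "cdot v ((matrix_inv X - matrix_inv Y) *v v)
      = cdot v (adjoint_mat (matrix_inv X) *v ((Y - X) *v (matrix_inv Y *v v)))"
    by (simp add: hermitian_matrix_inv[OF assms(1,3)] matrix_inv_diff[OF assms(1,2)]
        matrix_vector_mul_assoc matrix_mul_assoc)
  then show ?thesis
    by (simp add: cdot_adjoint_mat)
qed

lemma bounded_below_if_psd_increments:
  fixes F S :: "real \<Rightarrow> complex^'n^'n"
  assumes S_eq: "\<And>x. x \<in> {a..b} \<Longrightarrow> (F has_integral (S x - S a)) {a..x}"
    and F_psd: "\<And>y. y \<in> {a..b} \<Longrightarrow> psd_mat (F y)"
    and Sa_pd: "pd_mat (S a)"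
  obtains c where "c > 0"
    and "\<And>x u. x \<in> {a..b} \<Longrightarrow> c * norm u \<le> norm (S x *v u)"
    and "\<And>x. x \<in> {a..b} \<Longrightarrow> adjoint_mat (S x) = S x"
proof -
  obtain c where "c > 0" and c: "\<And>u. c * (norm u)\<^sup>2 \<le> Re (cdot u (S a *v u))"
    using pd_mat_coercive[OF Sa_pd] by blast
  have incr_psd: "psd_mat (S x - S a)" if "x \<in> {a..b}" for x
    using has_integral_psd_mat[OF S_eq[OF that]] F_psd that by auto
  have "c * norm u \<le> norm (S x *v u)" if x: "x \<in> {a..b}" for x u
  proof (rule norm_mult_ge_if_coercive)
    have "cdot u (S x *v u) = cdot u (S a *v u) + cdot u ((S x - S a) *v u)"
      by (simp add: cdot_diff_mat)
    moreover have "0 \<le> Re (cdot u ((S x - S a) *v u))"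
      using incr_psd[OF x] by (simp add: psd_mat_def)
    ultimately show "c * (norm u)\<^sup>2 \<le> Re (cdot u (S x *v u))"
      using c[of u] by simp
  qed
  moreover have "adjoint_mat (S x) = S x" if "x \<in> {a..b}" for x
    using incr_psd[OF that] Sa_pd
    by (simp add: psd_mat_def pd_mat_def hermitian_mat_def adjoint_mat_diff)
  ultimately show ?thesis
    using that \<open>c > 0\<close> by blast
qed

lemma norm_integral_cdot_mult_diff_le:
  fixes F :: "real \<Rightarrow> complex^'n^'n"
  assumes "F integrable_on {x..y}" "(\<lambda>t. norm (F t)) integrable_on {x..y}"
    and "(\<lambda>t. cdot (w t) (F t *v w t)) integrable_on {x..y}"
    and close: "\<And>t. t \<in> {x..y} \<Longrightarrow> norm (p - w t) \<le> e \<and> norm (q - w t) \<le> e \<and> norm (w t) \<le> W"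
    and "norm q \<le> W"
  shows "norm (integral {x..y} (\<lambda>t. cdot p (F t *v q)) - integral {x..y} (\<lambda>t. cdot (w t) (F t *v w t)))
    \<le> e * (2 * W * integral {x..y} (\<lambda>t. norm (F t)))"
proof -
  have int_pq: "(\<lambda>t. cdot p (F t *v q)) integrable_on {x..y}"
    using integrable_linear[OF assms(1) bounded_linear_cdot_mat] by (simp add: o_def)
  have "norm (integral {x..y} (\<lambda>t. cdot p (F t *v q)) - integral {x..y} (\<lambda>t. cdot (w t) (F t *v w t)))
      = norm (integral {x..y} (\<lambda>t. cdot p (F t *v q) - cdot (w t) (F t *v w t)))"
    using int_pq assms(3) by (simp add: integral_diff)
  also have "\<dots> \<le> integral {x..y} (\<lambda>t. e * (2 * W) * norm (F t))"
  proof (rule integral_norm_bound_integral)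
    show "(\<lambda>t. cdot p (F t *v q) - cdot (w t) (F t *v w t)) integrable_on {x..y}"
      using int_pq assms(3) by (rule integrable_diff)
    show "(\<lambda>t. e * (2 * W) * norm (F t)) integrable_on {x..y}"
      using assms(2) by (rule integrable_on_mult_right)
  next
    fix t assume t: "t \<in> {x..y}"
    then have "0 \<le> e" "0 \<le> W"
      using close[OF t] norm_ge_zero order_trans by blast+
    then have "norm (p - w t) * norm q \<le> e * W" "norm (w t) * norm (q - w t) \<le> W * e"
      using close[OF t] \<open>norm q \<le> W\<close> by (intro mult_mono; simp)+
    then have "norm (p - w t) * norm q + norm (w t) * norm (q - w t) \<le> e * (2 * W)"
      by (simp add: algebra_simps)
    then have "norm (F t) * (norm (p - w t) * norm q + norm (w t) * norm (q - w t))
        \<le> norm (F t) * (e * (2 * W))"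
      by (intro mult_left_mono) simp_all
    then show "norm (cdot p (F t *v q) - cdot (w t) (F t *v w t)) \<le> e * (2 * W) * norm (F t)"
      using norm_cdot_mult_diff_le[of p "F t" q "w t"] by (simp add: mult.commute)
  qed
  finally show ?thesis
    by (simp add: mult.assoc)
qed

lemma has_integral_cdot_diagonal:
  fixes F :: "real \<Rightarrow> complex^'n^'n" and w :: "real \<Rightarrow> complex^'n" and T :: "real \<Rightarrow> complex"
  assumes "a \<le> b" and F_int: "F absolutely_integrable_on {a..b}"
    and w_cont: "continuous_on {a..b} w"
    and increment: "\<And>x y. a \<le> x \<Longrightarrow> x \<le> y \<Longrightarrow> y \<le> b \<Longrightarrow>
      T y - T x = integral {x..y} (\<lambda>t. cdot (w x) (F t *v w y))"
  shows "((\<lambda>t. cdot (w t) (F t *v w t)) has_integral (T b - T a)) {a..b}"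
proof -
  obtain W where W: "\<And>t. t \<in> {a..b} \<Longrightarrow> norm (w t) \<le> W"
    using compact_imp_bounded[OF compact_continuous_image[OF w_cont compact_Icc]]
    unfolding bounded_iff by blast
  have "(\<lambda>t. F t *v w t) absolutely_integrable_on {a..b}"
    using absolutely_integrable_continuous_bilinear[OF _ w_cont F_int, of "\<lambda>q M. M *v q"]
      bilinear_matrix_vector_mult unfolding bilinear_def by blast
  then have "(\<lambda>t. cdot (w t) (F t *v w t)) absolutely_integrable_on {a..b}"
    by (rule absolutely_integrable_continuous_bilinear[OF bilinear_cdot w_cont])
  then have phi_int: "(\<lambda>t. cdot (w t) (F t *v w t)) integrable_on {x..y}" if "a \<le> x" "y \<le> b" for x y
    using that unfolding absolutely_integrable_on_def
    by (auto intro: integrable_subinterval_real[of _ a b])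
  have F_int': "F integrable_on {x..y}" "(\<lambda>t. norm (F t)) integrable_on {x..y}"
    if "a \<le> x" "y \<le> b" for x y
    using F_int that unfolding absolutely_integrable_on_def
    by (auto intro: integrable_subinterval_real[of _ a b])
  show ?thesis
  proof (rule has_integral_if_increments_approx[where g = "\<lambda>t. 2 * W * norm (F t)", OF \<open>a \<le> b\<close>])
    show "(\<lambda>t. cdot (w t) (F t *v w t)) integrable_on {a..b}"
      "(\<lambda>t. 2 * W * norm (F t)) integrable_on {a..b}"
      using phi_int F_int'(2) by (auto intro: integrable_on_mult_right)
    fix e :: real assume "e > 0"
    then obtain d where "d > 0"
      and d: "\<And>s t. s \<in> {a..b} \<Longrightarrow> t \<in> {a..b} \<Longrightarrow> dist t s < d \<Longrightarrow> dist (w t) (w s) < e"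
      using compact_uniformly_continuous[OF w_cont compact_Icc]
      unfolding uniformly_continuous_on_def by metis
    have "norm (T y - T x - integral {x..y} (\<lambda>t. cdot (w t) (F t *v w t)))
        \<le> e * integral {x..y} (\<lambda>t. 2 * W * norm (F t))"
      if xy: "a \<le> x" "x \<le> y" "y \<le> b" "y - x < d" for x y
    proof -
      have "norm (w x - w t) \<le> e \<and> norm (w y - w t) \<le> e \<and> norm (w t) \<le> W" if "t \<in> {x..y}" for t
        using d[of t x] d[of t y] W[of t] xy that by (auto simp: dist_norm)
      then show ?thesis
        using norm_integral_cdot_mult_diff_le[OF F_int'(1,2) phi_int] W[of y] increment xy
        by simp
    qed
    then show "\<exists>d>0. \<forall>x y. a \<le> x \<longrightarrow> x \<le> y \<longrightarrow> y \<le> b \<longrightarrow> y - x < d \<longrightarrow>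
        norm (T y - T x - integral {x..y} (\<lambda>t. cdot (w t) (F t *v w t)))
          \<le> e * integral {x..y} (\<lambda>t. 2 * W * norm (F t))"
      using \<open>d > 0\<close> by blast
  qed
qed

lemma has_integral_matrix_inv_quadratic_form:
  fixes F S :: "real \<Rightarrow> complex^'n^'n"
  assumes "a \<le> b"
    and F_int: "F absolutely_integrable_on {a..b}"
    and S_eq: "\<And>x. x \<in> {a..b} \<Longrightarrow> (F has_integral (S x - S a)) {a..x}"
    and F_psd: "\<And>y. y \<in> {a..b} \<Longrightarrow> psd_mat (F y)"
    and Sa_pd: "pd_mat (S a)"
  shows "((\<lambda>y. cdot (matrix_inv (S y) *v v) (F y *v (matrix_inv (S y) *v v)))
           has_integral cdot v ((matrix_inv (S a) - matrix_inv (S b)) *v v)) {a..b}"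
proof -
  obtain c where "c > 0" and S_bound: "\<And>x u. x \<in> {a..b} \<Longrightarrow> c * norm u \<le> norm (S x *v u)"
    and S_herm: "\<And>x. x \<in> {a..b} \<Longrightarrow> adjoint_mat (S x) = S x"
    using bounded_below_if_psd_increments[OF S_eq F_psd Sa_pd] by blast
  have S_inv: "invertible (S x)" if "x \<in> {a..b}" for x
    by (rule invertible_if_norm_mult_ge[OF \<open>c > 0\<close> S_bound[OF that]])
  have F_int': "F integrable_on {x..y}" if "a \<le> x" "y \<le> b" for x y
    using F_int that unfolding absolutely_integrable_on_def
    by (auto intro: integrable_subinterval_real[of _ a b])
  define T where "T x = - cdot v (matrix_inv (S x) *v v)" for x
  have "((\<lambda>y. cdot (matrix_inv (S y) *v v) (F y *v (matrix_inv (S y) *v v))) has_integral (T b - T a)) {a..b}"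
  proof (rule has_integral_cdot_diagonal[OF \<open>a \<le> b\<close> F_int])
    show "continuous_on {a..b} (\<lambda>x. matrix_inv (S x) *v v)"
      by (rule continuous_on_matrix_inv_mult[OF continuous_on_if_has_integral_increments[OF S_eq]
            \<open>c > 0\<close> S_bound])
    fix x y assume xy: "a \<le> x" "x \<le> y" "y \<le> b"
    have "S y - S x = integral {x..y} F"
      using Henstock_Kurzweil_Integration.integral_combine[OF xy(1,2) F_int'[OF order_refl xy(3)]]
        integral_unique[OF S_eq] xy by (simp add: algebra_simps)
    then show "T y - T x = integral {x..y} (\<lambda>t. cdot (matrix_inv (S x) *v v) (F t *v (matrix_inv (S y) *v v)))"
      using cdot_matrix_inv_diff[OF S_inv S_inv S_herm, of x y v] xy
        integral_linear[OF F_int'[of x y] bounded_linear_cdot_mat]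
      by (simp add: T_def o_def cdot_diff_mat)
  qed
  then show ?thesis
    by (simp add: T_def cdot_diff_mat)
qed

lemma cdot_sandwich:
  "cdot (adjoint_mat X *v u) (H *v (adjoint_mat X *v u)) = cdot u ((X ** H ** adjoint_mat X) *v u)"
  by (simp add: cdot_adjoint_mat_left matrix_vector_mul_assoc matrix_mul_assoc)

lemma psd_mat_sandwich:
  fixes X :: "complex^'m^'n"
  assumes "psd_mat H"
  shows "psd_mat (X ** H ** adjoint_mat X)"
  using assms cdot_sandwich[of X _ H, symmetric]
  by (simp add: psd_mat_def hermitian_mat_def adjoint_mat_mult matrix_mul_assoc)

lemma absolutely_integrable_sandwich:
  fixes X :: "real \<Rightarrow> complex^'m^'n" and H :: "real \<Rightarrow> complex^'m^'m"
  assumes X: "continuous_on {a..b} X" and H: "H absolutely_integrable_on {a..b}"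
  shows "(\<lambda>y. X y ** H y ** adjoint_mat (X y)) absolutely_integrable_on {a..b}"
proof -
  have "(\<lambda>y. X y ** H y) absolutely_integrable_on {a..b}"
    by (rule absolutely_integrable_continuous_bilinear[OF bilinear_matrix_matrix_mult X H])
  moreover have "continuous_on {a..b} (\<lambda>y. adjoint_mat (X y))"
    by (rule bounded_linear.continuous_on[OF bounded_linear_adjoint_mat X])
  moreover have "bilinear (\<lambda>(Q :: complex^'n^'m) (K :: complex^'m^'n). K ** Q)"
    using bilinear_matrix_matrix_mult unfolding bilinear_def by blast
  ultimately show ?thesis
    using absolutely_integrable_continuous_bilinear by blast
qed

lemma cdot_skew_sandwich:
  fixes J :: "complex^'m^'m"
  assumes "adjoint_mat J = - J"
  shows "cdot (J *v (adjoint_mat P *v u)) (H *v (J *v (adjoint_mat P *v u)))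
    = cdot u ((P ** J ** H ** adjoint_mat (P ** J)) *v u)"
proof -
  have "J *v (adjoint_mat P *v u) = - (adjoint_mat (P ** J) *v u)"
    by (simp add: adjoint_mat_mult assms matrix_vector_mul_assoc
        bilinear_lneg[OF bilinear_matrix_matrix_mult] bilinear_lneg[OF bilinear_matrix_vector_mult])
  then show ?thesis
    using cdot_sandwich[of "P ** J" u H]
    by (simp add: bilinear_lneg[OF bilinear_cdot] bilinear_rneg[OF bilinear_cdot]
        bilinear_rneg[OF bilinear_matrix_vector_mult])
qed

theorem proposition7p2:
  fixes ell :: ereal
    and J :: "complex^'m^'m"
    and H1 H0 :: "real \<Rightarrow> complex^'m^'m"
    and A :: "complex^'n^'n"
    and Pm :: "real \<Rightarrow> complex^'m^'n"
    and S :: "real \<Rightarrow> complex^'n^'n"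
    and h :: "complex^'n"
    and a t :: real
  assumes ell_pos: "0 < ell"
    and J_skew: "adjoint_mat J = - J"
    and H1_nonneg: "\<And>x. 0 \<le> x \<Longrightarrow> ereal x < ell \<Longrightarrow> psd_mat (H1 x)"
    and H0_herm: "\<And>x. 0 \<le> x \<Longrightarrow> ereal x < ell \<Longrightarrow> hermitian_mat (H0 x)"
    and H1_loc: "\<And>b. 0 \<le> b \<Longrightarrow> ereal b < ell \<Longrightarrow> H1 absolutely_integrable_on {0..b}"
    and H0_loc: "\<And>b. 0 \<le> b \<Longrightarrow> ereal b < ell \<Longrightarrow> H0 absolutely_integrable_on {0..b}"
    and S0_pos: "pd_mat (S 0)"
    and identity0: "A ** S 0 - S 0 ** adjoint_mat A = Pm 0 ** J ** adjoint_mat (Pm 0)"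
    and Pi_eq: "\<And>x. 0 \<le> x \<Longrightarrow> ereal x < ell \<Longrightarrow>
       ((\<lambda>y. - (A ** Pm y ** J ** H1 y) - Pm y ** J ** H0 y) has_integral (Pm x - Pm 0)) {0..x}"
    and S_eq: "\<And>x. 0 \<le> x \<Longrightarrow> ereal x < ell \<Longrightarrow>
       ((\<lambda>y. Pm y ** J ** H1 y ** adjoint_mat J ** adjoint_mat (Pm y)) has_integral (S x - S 0)) {0..x}"
    and a_pos: "0 < a" and a_lt: "ereal a < ell"
  shows
    "(let z = (\<lambda>x s. J ** adjoint_mat (Pm x) ** matrix_inv (S x) ** mat_exp ((- s) *\<^sub>R A) *v h);
          E = (\<lambda>s. sqrt (Re (integral {0..a} (\<lambda>x. cdot (z x s) (H1 x *v z x s))))) in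
      E t = sqrt (Re (cdot h (mat_exp ((- t) *\<^sub>R adjoint_mat A) **
                     (matrix_inv (S 0) - matrix_inv (S a)) ** mat_exp ((- t) *\<^sub>R A) *v h))))"
proof -
  have in_range: "0 \<le> x" "ereal x < ell" if "x \<in> {0..a}" for x
    using that le_less_trans[OF _ a_lt, of "ereal x"] by auto
  define F where "F y = Pm y ** J ** H1 y ** adjoint_mat (Pm y ** J)" for y
  have "continuous_on {0..a} (\<lambda>y. Pm y ** J)"
    using continuous_on_if_has_integral_increments[of 0 a _ Pm] Pi_eq in_range
    by (intro bilinear_continuous_on_compose[OF _ continuous_on_const bilinear_matrix_matrix_mult]) blast
  then have F_int: "F absolutely_integrable_on {0..a}"
    unfolding F_def[abs_def]
    by (rule absolutely_integrable_sandwich[OF _ H1_loc]) (use a_pos a_lt in auto)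
  have F_S: "(F has_integral (S x - S 0)) {0..x}" if "x \<in> {0..a}" for x
    using S_eq[OF in_range[OF that]] by (simp add: F_def[abs_def] adjoint_mat_mult matrix_mul_assoc)
  have F_psd: "psd_mat (F y)" if "y \<in> {0..a}" for y
    unfolding F_def by (rule psd_mat_sandwich[OF H1_nonneg[OF in_range[OF that]]])
  have integral_eq: "integral {0..a} (\<lambda>y. cdot (matrix_inv (S y) *v v) (F y *v (matrix_inv (S y) *v v)))
      = cdot v ((matrix_inv (S 0) - matrix_inv (S a)) *v v)" for v
    by (rule has_integral_matrix_inv_quadratic_form[THEN integral_unique, OF _ F_int F_S F_psd S0_pos])
       (use a_pos in auto)
  define E where "E = mat_exp ((- t) *\<^sub>R A)"
  have "cdot (J ** adjoint_mat (Pm x) ** matrix_inv (S x) ** E *v h)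
        (H1 x *v (J ** adjoint_mat (Pm x) ** matrix_inv (S x) ** E *v h))
      = cdot (matrix_inv (S x) *v (E *v h)) (F x *v (matrix_inv (S x) *v (E *v h)))" for x
    using cdot_skew_sandwich[OF J_skew, of "Pm x" "matrix_inv (S x) *v (E *v h)" "H1 x"]
    by (simp add: F_def matrix_vector_mul_assoc matrix_mul_assoc)
  moreover have "mat_exp ((- t) *\<^sub>R adjoint_mat A) = adjoint_mat E"
    by (simp add: E_def adjoint_mat_mat_exp adjoint_mat_scaleR adjoint_mat_minus)
  ultimately show ?thesis
    unfolding Let_def E_def[symmetric]
    by (simp add: integral_eq cdot_adjoint_mat flip: matrix_vector_mul_assoc)
qed

end
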